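(* For every positive integer $k$ there is an edge-coloured digraph $D_k$ with two vertices $u,v$ such that: (I) for every set $S$ of $k$ colours there is a rainbow path from $u$ to $v$ with no edge of colour in $S$; and (II) any two rainbow paths from $u$ to $v$ in $D_k$ have a common edge.
   Context: A path is a sequence of distinct vertices with consecutive vertices joined by directed edges; in an edge-coloured digraph it is rainbow if its edges have pairwise distinct colours. *)

theory Defs
  imports Main
begin

definition path_edges :: "'a list \<Rightarrow> ('a \<times> 'a) list" where
  "path_edges p = zip p (tl p)"

definition is_path :: "('a \<times> 'a) set \<Rightarrow> 'a list \<Rightarrow> 'a \<Rightarrow> 'a \<Rightarrow> bool" where
  "is_path E p u v \<longleftrightarrow> p \<noteq> [] \<and> distinct p \<and> hd p = u \<and> last p = v
     \<and> set (path_edges p) \<subseteq> E"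

definition rainbow :: "('a \<times> 'a \<Rightarrow> 'c) \<Rightarrow> 'a list \<Rightarrow> bool" where
  "rainbow c p \<longleftrightarrow> distinct (map c (path_edges p))"

end

theory Submission imports Defs begin

text \<open>The digraph is a chain of 2k+1 blocks between consecutive hubs. A block is crossed either
  by a direct arc whose colour belongs to that block alone, or by one of k two-arc detours; detour j
  is coloured j and then k+j in every block. A set S of k colours meets m direct arcs and, since
  each colour lies on at most one detour index, blocks at most k - m detour indices, so the blocked
  blocks can be crossed by pairwise different free detours. Conversely, the second arcs of detours
  carry only the k colours k, ..., 2k-1, so a rainbow path crosses at most k blocks by a detour and
  hence uses at least k+1 of the 2k+1 direct arcs; two such paths share one.\<close>

lemma path_edges_Cons_Cons: "path_edges (x # y # ys) = (x, y) # path_edges (y # ys)"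
  by (simp add: path_edges_def)

lemma path_edges_snoc: "p \<noteq> [] \<Longrightarrow> path_edges (p @ [a]) = path_edges p @ [(last p, a)]"
proof (induction p rule: induct_list012)
  case (3 x y ys)
  then show ?case by (simp add: path_edges_Cons_Cons)
qed (simp_all add: path_edges_def)

lemma increasing_path_visits:
  fixes p :: "'a::linorder list"
  assumes "\<forall>(a, b) \<in> set (path_edges p). a < b \<and> (\<forall>y. P y \<longrightarrow> \<not> (a < y \<and> y < b))"
    and "p \<noteq> []" "P y" "hd p \<le> y" "y \<le> last p"
  shows "y \<in> set p"
  using assms
proof (induction p rule: induct_list012)
  case (3 x z zs)
  have "x < z" "\<not> (x < y \<and> y < z)"
    using "3.prems"(1,3) by (simp_all add: path_edges_Cons_Cons)
  then show ?case
    using "3.IH"(2) "3.prems" by (cases "y = x") (auto simp: path_edges_Cons_Cons)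
qed auto

lemma path_edges_into: "x \<in> set p \<Longrightarrow> x \<noteq> hd p \<Longrightarrow> \<exists>a. (a, x) \<in> set (path_edges p)"
proof (induction p rule: induct_list012)
  case (3 x y ys)
  then show ?case by (auto simp: path_edges_Cons_Cons)
qed auto

text \<open>The colour is decoded from the arc alone: direct arcs
  have length \<open>Suc k\<close> and get colour \<open>2*k + hub k i\<close>; a detour arc leaving a hub has
  length \<open>j + 1\<close>, one entering a hub starts at residue \<open>j + 1\<close> modulo \<open>Suc k\<close>.\<close>

definition hub :: "nat \<Rightarrow> nat \<Rightarrow> nat" where
  "hub k i = Suc k * i"

definition detour :: "nat \<Rightarrow> nat \<Rightarrow> nat \<Rightarrow> nat" where
  "detour k i j = Suc k * i + 1 + j"

definition gadget_arcs :: "nat \<Rightarrow> (nat \<times> nat) set" where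
  "gadget_arcs k = {(a, b). \<exists>i < 2*k+1. (a = hub k i \<and> b = hub k (Suc i))
     \<or> (\<exists>j < k. a = hub k i \<and> b = detour k i j)
     \<or> (\<exists>j < k. a = detour k i j \<and> b = hub k (Suc i))}"

definition gadget_colour :: "nat \<Rightarrow> nat \<times> nat \<Rightarrow> nat" where
  "gadget_colour k e = (if snd e = fst e + Suc k then 2*k + fst e
     else if fst e mod Suc k = 0 then snd e - fst e - 1 else k + fst e mod Suc k - 1)"

lemma hub_0 [simp]: "hub k 0 = 0"
  by (simp add: hub_def)

lemma hub_less_hub_iff [simp]: "hub k i < hub k i' \<longleftrightarrow> i < i'"
  by (simp add: hub_def del: mult_Suc)

lemma hub_le_hub_iff [simp]: "hub k i \<le> hub k i' \<longleftrightarrow> i \<le> i'"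
  by (simp add: hub_def del: mult_Suc)

lemma hub_eq_hub_iff [simp]: "hub k i = hub k i' \<longleftrightarrow> i = i'"
  by (simp add: hub_def del: mult_Suc)

lemma hub_eq_0_iff [simp]: "hub k i = 0 \<longleftrightarrow> i = 0"
  by (auto simp: hub_def)

lemma hub_less_detour: "hub k i < detour k i j"
  by (simp add: hub_def detour_def)

lemma detour_less_hub_Suc: "j < k \<Longrightarrow> detour k i j < hub k (Suc i)"
  by (simp add: hub_def detour_def)

lemma detour_neq_hub:
  assumes "j < k"
  shows "detour k i j \<noteq> hub k t"
proof
  assume "detour k i j = hub k t"
  then have "hub k i < hub k t" "hub k t < hub k (Suc i)"
    using hub_less_detour[of k i j] detour_less_hub_Suc[OF assms, of i] by simp_all
  then show False
    by simp
qed

lemma gadget_colour_direct: "gadget_colour k (hub k i, hub k (Suc i)) = 2*k + hub k i"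
  by (simp add: gadget_colour_def hub_def)

lemma gadget_colour_detour_in: "j < k \<Longrightarrow> gadget_colour k (hub k i, detour k i j) = j"
  by (simp add: gadget_colour_def hub_def detour_def del: mult_Suc)

lemma gadget_colour_detour_out:
  assumes "j < k"
  shows "gadget_colour k (detour k i j, hub k (Suc i)) = k + j"
proof -
  have "(Suc k * i + 1 + j) mod Suc k = Suc j"
    using assms
    by (metis Suc_less_eq add.commute add_Suc_right mod_less mod_mult_self2 plus_1_eq_Suc mult.commute)
  then show ?thesis
    using assms by (simp add: gadget_colour_def hub_def detour_def)
qed

lemma gadget_arcs_direct: "i < 2*k+1 \<Longrightarrow> (hub k i, hub k (Suc i)) \<in> gadget_arcs k"
  unfolding gadget_arcs_def by blast

lemma gadget_arcs_detour_in: "i < 2*k+1 \<Longrightarrow> j < k \<Longrightarrow> (hub k i, detour k i j) \<in> gadget_arcs k"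
  unfolding gadget_arcs_def by blast

lemma gadget_arcs_detour_out:
  "i < 2*k+1 \<Longrightarrow> j < k \<Longrightarrow> (detour k i j, hub k (Suc i)) \<in> gadget_arcs k"
  unfolding gadget_arcs_def by blast

lemma gadget_arc_within_block:
  assumes "(a, b) \<in> gadget_arcs k"
  obtains i where "i < 2*k+1" "hub k i \<le> a" "a < b" "b \<le> hub k (Suc i)"
proof -
  obtain i where "i < 2*k+1" and ab: "(a = hub k i \<and> b = hub k (Suc i))
     \<or> (\<exists>j < k. a = hub k i \<and> b = detour k i j) \<or> (\<exists>j < k. a = detour k i j \<and> b = hub k (Suc i))"
    using assms unfolding gadget_arcs_def by blast
  moreover have "hub k i \<le> a \<and> a < b \<and> b \<le> hub k (Suc i)"
    using ab hub_less_detour[of k i] detour_less_hub_Suc[of _ k i] by (auto simp: less_imp_le)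
  ultimately show ?thesis
    using that by blast
qed

lemma gadget_arc_skips_no_hub:
  assumes "(a, b) \<in> gadget_arcs k"
  shows "a < b \<and> (\<forall>y. y \<in> range (hub k) \<longrightarrow> \<not> (a < y \<and> y < b)) \<and> b \<le> hub k (2*k+1)"
proof -
  obtain i where i: "i < 2*k+1" "hub k i \<le> a" "a < b" "b \<le> hub k (Suc i)"
    using gadget_arc_within_block[OF assms] .
  have "\<not> (a < hub k t \<and> hub k t < b)" for t
    using i(2,4) hub_less_hub_iff[of k i t] hub_less_hub_iff[of k t "Suc i"] by linarith
  moreover have "b \<le> hub k (2*k+1)"
    using i(1,4) hub_le_hub_iff[of k "Suc i" "2*k+1"] by linarith
  ultimately show ?thesis
    using i(3) by blast
qed

lemma gadget_arc_into_hub: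
  assumes "(a, hub k (Suc i)) \<in> gadget_arcs k" and "a \<noteq> hub k i"
  shows "gadget_colour k (a, hub k (Suc i)) \<in> {k..<2*k}"
proof -
  obtain j where "j < k" "a = detour k i j"
    using assms by (auto simp: gadget_arcs_def detour_neq_hub detour_neq_hub[symmetric])
  then show ?thesis
    using gadget_colour_detour_out[of j k i] by simp
qed

primrec detour_route :: "nat \<Rightarrow> (nat \<Rightarrow> nat option) \<Rightarrow> nat \<Rightarrow> nat list" where
  "detour_route k g 0 = [0]"
| "detour_route k g (Suc n) = detour_route k g n
     @ (case g n of None \<Rightarrow> [] | Some j \<Rightarrow> [detour k n j]) @ [hub k (Suc n)]"

definition segment_colours :: "nat \<Rightarrow> (nat \<Rightarrow> nat option) \<Rightarrow> nat \<Rightarrow> nat list" where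
  "segment_colours k g i = (case g i of None \<Rightarrow> [2*k + hub k i] | Some j \<Rightarrow> [j, k + j])"

lemma detour_route_not_Nil [simp]: "detour_route k g n \<noteq> []"
  by (cases n) auto

lemma hd_detour_route [simp]: "hd (detour_route k g n) = 0"
  by (induction n) auto

lemma last_detour_route [simp]: "last (detour_route k g n) = hub k n"
  by (cases n) auto

lemma path_edges_detour_route_Suc:
  "path_edges (detour_route k g (Suc n)) = path_edges (detour_route k g n)
     @ (case g n of None \<Rightarrow> [(hub k n, hub k (Suc n))]
        | Some j \<Rightarrow> [(hub k n, detour k n j), (detour k n j, hub k (Suc n))])"
proof (cases "g n")
  case (Some j)
  have "path_edges ((detour_route k g n @ [detour k n j]) @ [hub k (Suc n)])
    = path_edges (detour_route k g n @ [detour k n j]) @ [(detour k n j, hub k (Suc n))]"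
    using path_edges_snoc[of "detour_route k g n @ [detour k n j]"] by simp
  then show ?thesis
    using Some path_edges_snoc[of "detour_route k g n" "detour k n j"] by simp
qed (simp add: path_edges_snoc)

lemma detour_route_bounded_distinct:
  assumes "\<And>i j. g i = Some j \<Longrightarrow> j < k"
  shows "set (detour_route k g n) \<subseteq> {..hub k n} \<and> distinct (detour_route k g n)"
proof (induction n)
  case (Suc n)
  have "hub k n < hub k (Suc n)"
    by simp
  moreover have "hub k n < detour k n j" "detour k n j < hub k (Suc n)" if "g n = Some j" for j
    using hub_less_detour detour_less_hub_Suc assms that by blast+
  ultimately show ?case
    using Suc by (cases "g n") (auto simp del: hub_less_hub_iff)
qed simp

lemma detour_route_arcs:
  assumes "\<And>i j. g i = Some j \<Longrightarrow> j < k" and "n \<le> 2*k+1"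
  shows "set (path_edges (detour_route k g n)) \<subseteq> gadget_arcs k"
  using assms(2)
proof (induction n)
  case (Suc n)
  then show ?case
    using assms(1)[of n] by (cases "g n") (auto simp: path_edges_detour_route_Suc gadget_arcs_direct
        gadget_arcs_detour_in gadget_arcs_detour_out simp del: detour_route.simps)
qed (simp add: path_edges_def)

lemma is_path_detour_route:
  assumes "\<And>i j. g i = Some j \<Longrightarrow> j < k" and "n \<le> 2*k+1"
  shows "is_path (gadget_arcs k) (detour_route k g n) 0 (hub k n)"
  using detour_route_bounded_distinct[OF assms(1)] detour_route_arcs[OF assms]
  by (simp add: is_path_def)

lemma gadget_colours_detour_route:
  assumes "\<And>i j. g i = Some j \<Longrightarrow> j < k"
  shows "map (gadget_colour k) (path_edges (detour_route k g n))
    = concat (map (segment_colours k g) [0..<n])"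
proof (induction n)
  case (Suc n)
  then show ?case
    using assms[of n]
    by (cases "g n") (simp_all add: path_edges_detour_route_Suc segment_colours_def
        gadget_colour_direct gadget_colour_detour_in gadget_colour_detour_out del: detour_route.simps)
qed (simp add: path_edges_def)

lemma segment_colours_disjoint:
  assumes "\<And>i j. g i = Some j \<Longrightarrow> j < k"
    and "\<And>i i' j. g i = Some j \<Longrightarrow> g i' = Some j \<Longrightarrow> i = i'"
    and "i \<noteq> i'"
  shows "set (segment_colours k g i) \<inter> set (segment_colours k g i') = {}"
  using assms(1)[of i] assms(1)[of i'] assms(2)[of i _ i'] assms(3)
  by (cases "g i"; cases "g i'") (auto simp: segment_colours_def)

lemma distinct_segment_colours:
  assumes "\<And>i j. g i = Some j \<Longrightarrow> j < k"
    and "\<And>i i' j. g i = Some j \<Longrightarrow> g i' = Some j \<Longrightarrow> i = i'"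
  shows "distinct (concat (map (segment_colours k g) [0..<n]))"
proof (induction n)
  case (Suc n)
  have "distinct (segment_colours k g n)"
    using assms(1)[of n] by (cases "g n") (auto simp: segment_colours_def)
  moreover have "set (segment_colours k g i) \<inter> set (segment_colours k g n) = {}" if "i < n" for i
    using segment_colours_disjoint[OF assms, where i = i and i' = n] that by simp
  ultimately show ?case
    using Suc by (auto simp: distinct_append disjoint_iff)
qed simp

text \<open>Each colour x < 2k lies only on detour \<open>x mod k\<close>.\<close>

lemma card_blocked_direct_arcs_le_free_detours:
  assumes "finite S" and "card S \<le> k"
  shows "card {i. i < 2*k+1 \<and> 2*k + hub k i \<in> S} \<le> card {j. j < k \<and> j \<notin> S \<and> k + j \<notin> S}"
proof -
  define low where "low = S \<inter> {..<2*k}"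
  define blocked_detours where "blocked_detours = {j. j < k \<and> (j \<in> S \<or> k + j \<in> S)}"
  have "inj_on (\<lambda>i. 2*k + hub k i) {i. i < 2*k+1 \<and> 2*k + hub k i \<in> S}"
    by (auto simp: inj_on_def)
  moreover have "(\<lambda>i. 2*k + hub k i) ` {i. i < 2*k+1 \<and> 2*k + hub k i \<in> S} \<subseteq> S - {..<2*k}"
    by auto
  ultimately have "card {i. i < 2*k+1 \<and> 2*k + hub k i \<in> S} \<le> card (S - {..<2*k})"
    using card_inj_on_le assms(1) by blast
  also have "\<dots> = card S - card low"
    using card_Int_Diff[OF assms(1), of "{..<2*k}"] by (simp add: low_def)
  also have "\<dots> \<le> k - card blocked_detours"
  proof -
    have "blocked_detours \<subseteq> (\<lambda>x. x mod k) ` low"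
    proof
      fix j assume "j \<in> blocked_detours"
      then have "j < k" "j \<in> S \<or> k + j \<in> S"
        by (auto simp: blocked_detours_def)
      then show "j \<in> (\<lambda>x. x mod k) ` low"
        by (auto simp: low_def intro: image_eqI[of j _ j] image_eqI[of j _ "k + j"])
    qed
    then have "card blocked_detours \<le> card low"
      using assms(1) by (metis card_image_le card_mono finite_Int finite_imageI low_def order_trans)
    then show ?thesis
      using assms(2) by linarith
  qed
  also have "\<dots> = card {j. j < k \<and> j \<notin> S \<and> k + j \<notin> S}"
  proof -
    have "{j. j < k \<and> j \<notin> S \<and> k + j \<notin> S} = {..<k} - blocked_detours"
      by (auto simp: blocked_detours_def)
    moreover have "blocked_detours \<subseteq> {..<k}"
      by (auto simp: blocked_detours_def)
    ultimately show ?thesis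
      by (simp add: card_Diff_subset finite_subset)
  qed
  finally show ?thesis .
qed

lemma gadget_rainbow_path_avoiding:
  assumes "finite S" and "card S \<le> k"
  shows "\<exists>p. is_path (gadget_arcs k) p 0 (hub k (2*k+1)) \<and> rainbow (gadget_colour k) p
    \<and> (\<forall>e \<in> set (path_edges p). gadget_colour k e \<notin> S)"
proof -
  define blocked where "blocked = {i. i < 2*k+1 \<and> 2*k + hub k i \<in> S}"
  define free where "free = {j. j < k \<and> j \<notin> S \<and> k + j \<notin> S}"
  have "finite blocked"
    by (rule finite_subset[of _ "{..<2*k+1}"]) (auto simp: blocked_def)
  moreover have "finite free"
    by (rule finite_subset[of _ "{..<k}"]) (auto simp: free_def)
  moreover have "card blocked \<le> card free"
    unfolding blocked_def free_def by (rule card_blocked_direct_arcs_le_free_detours[OF assms])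
  ultimately have "\<exists>f. f ` blocked \<subseteq> free \<and> inj_on f blocked"
    by (rule card_le_inj)
  then obtain f where f: "f ` blocked \<subseteq> free" "inj_on f blocked"
    by blast
  define g where "g i = (if i \<in> blocked then Some (f i) else None)" for i
  have g_Some: "g i = Some j \<longleftrightarrow> i \<in> blocked \<and> j = f i" for i j
    by (auto simp: g_def)
  have f_free: "f i \<in> free" if "i \<in> blocked" for i
    using f(1) that by blast
  have g_less: "\<And>i j. g i = Some j \<Longrightarrow> j < k"
    using f_free by (auto simp: g_Some free_def)
  have g_inj: "\<And>i i' j. g i = Some j \<Longrightarrow> g i' = Some j \<Longrightarrow> i = i'"
    using f(2) by (auto simp: g_Some inj_on_def)
  have avoid: "set (segment_colours k g i) \<inter> S = {}" if "i < 2*k+1" for i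
  proof (cases "i \<in> blocked")
    case True
    then show ?thesis
      using f_free[OF True] by (simp add: segment_colours_def g_def free_def)
  next
    case False
    then show ?thesis
      using that by (simp add: segment_colours_def g_def blocked_def)
  qed
  define p where "p = detour_route k g (2*k+1)"
  have colours: "map (gadget_colour k) (path_edges p) = concat (map (segment_colours k g) [0..<2*k+1])"
    unfolding p_def by (rule gadget_colours_detour_route[OF g_less])
  have "is_path (gadget_arcs k) p 0 (hub k (2*k+1))"
    unfolding p_def by (rule is_path_detour_route[OF g_less order_refl])
  moreover have "rainbow (gadget_colour k) p"
    unfolding rainbow_def colours by (rule distinct_segment_colours[OF g_less g_inj])
  moreover have "gadget_colour k e \<notin> S" if "e \<in> set (path_edges p)" for e
  proof -
    have "gadget_colour k e \<in> set (concat (map (segment_colours k g) [0..<2*k+1]))"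
      using that colours[symmetric] by simp
    then obtain i where "i < 2*k+1" "gadget_colour k e \<in> set (segment_colours k g i)"
      by (auto simp del: upt_Suc)
    then show ?thesis
      using avoid by blast
  qed
  ultimately show ?thesis
    by blast
qed

lemma rainbow_gadget_path_direct_arcs:
  assumes path: "is_path (gadget_arcs k) p 0 (hub k (2*k+1))" and rainbow: "rainbow (gadget_colour k) p"
  shows "k + 1 \<le> card {i. i < 2*k+1 \<and> (hub k i, hub k (Suc i)) \<in> set (path_edges p)}"
proof -
  define direct where "direct = {i. i < 2*k+1 \<and> (hub k i, hub k (Suc i)) \<in> set (path_edges p)}"
  define indirect where "indirect = {..<2*k+1} - direct"
  have p: "p \<noteq> []" "hd p = 0" "last p = hub k (2*k+1)" "set (path_edges p) \<subseteq> gadget_arcs k"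
    using path by (auto simp: is_path_def)
  have "a < b \<and> (\<forall>y. y \<in> range (hub k) \<longrightarrow> \<not> (a < y \<and> y < b))"
    if "(a, b) \<in> set (path_edges p)" for a b
    using gadget_arc_skips_no_hub p(4) that by blast
  then have arcs_skip_no_hub:
    "\<forall>(a, b) \<in> set (path_edges p). a < b \<and> (\<forall>y. y \<in> range (hub k) \<longrightarrow> \<not> (a < y \<and> y < b))"
    by blast
  have "\<exists>a. (a, hub k (Suc i)) \<in> set (path_edges p)" if "i < 2*k+1" for i
  proof (rule path_edges_into)
    show "hub k (Suc i) \<in> set p"
      by (rule increasing_path_visits[OF arcs_skip_no_hub p(1)]) (use that p in auto)
    show "hub k (Suc i) \<noteq> hd p"
      using p(2) by simp
  qed
  then obtain h where h: "\<And>i. i \<in> indirect \<Longrightarrow> (h i, hub k (Suc i)) \<in> set (path_edges p)"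
    unfolding indirect_def by (metis DiffD1 lessThan_iff)
  define colour_into where "colour_into i = gadget_colour k (h i, hub k (Suc i))" for i
  have "colour_into ` indirect \<subseteq> {k..<2*k}"
  proof
    fix c assume "c \<in> colour_into ` indirect"
    then obtain i where i: "i \<in> indirect" "c = colour_into i"
      by blast
    have "h i \<noteq> hub k i"
      using h[OF i(1)] i(1) by (auto simp: indirect_def direct_def)
    then show "c \<in> {k..<2*k}"
      using gadget_arc_into_hub h[OF i(1)] i(2) p(4) by (auto simp: colour_into_def)
  qed
  moreover have "inj_on colour_into indirect"
  proof (rule inj_onI)
    fix i i' assume "i \<in> indirect" "i' \<in> indirect" "colour_into i = colour_into i'"
    moreover have "inj_on (gadget_colour k) (set (path_edges p))"
      using rainbow by (simp add: rainbow_def distinct_map)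
    ultimately have "(h i, hub k (Suc i)) = (h i', hub k (Suc i'))"
      using h by (simp add: colour_into_def inj_on_eq_iff)
    then show "i = i'"
      by simp
  qed
  ultimately have "card indirect \<le> k"
    using card_inj_on_le[of colour_into indirect "{k..<2*k}"] by simp
  moreover have "card indirect = 2*k+1 - card direct"
    by (simp add: indirect_def direct_def card_Diff_subset finite_subset subset_eq)
  ultimately show ?thesis
    by (simp add: direct_def)
qed

lemma card_subsets_intersect:
  assumes "A \<subseteq> X" "B \<subseteq> X" "finite X" "card X < card A + card B"
  shows "A \<inter> B \<noteq> {}"
proof
  assume "A \<inter> B = {}"
  then have "card (A \<union> B) = card A + card B"
    using assms by (intro card_Un_disjoint) (auto intro: finite_subset)
  moreover have "card (A \<union> B) \<le> card X"
    using assms by (intro card_mono) auto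
  ultimately show False
    using assms(4) by simp
qed

lemma gadget_rainbow_paths_share_arc:
  assumes "is_path (gadget_arcs k) p 0 (hub k (2*k+1))" "rainbow (gadget_colour k) p"
    and "is_path (gadget_arcs k) q 0 (hub k (2*k+1))" "rainbow (gadget_colour k) q"
  shows "set (path_edges p) \<inter> set (path_edges q) \<noteq> {}"
proof -
  define direct where
    "direct r = {i. i < 2*k+1 \<and> (hub k i, hub k (Suc i)) \<in> set (path_edges r)}" for r
  have "direct p \<inter> direct q \<noteq> {}"
    using card_subsets_intersect[of "direct p" "{..<2*k+1}" "direct q"]
      rainbow_gadget_path_direct_arcs[OF assms(1,2)] rainbow_gadget_path_direct_arcs[OF assms(3,4)]
    by (force simp: direct_def)
  then show ?thesis
    by (auto simp: direct_def)
qed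

theorem mainTheorem16:
  fixes k :: nat
  assumes "k > 0"
  shows "\<exists>(V :: nat set) (E :: (nat \<times> nat) set) (c :: nat \<times> nat \<Rightarrow> nat) u v.
    finite V \<and> E \<subseteq> V \<times> V \<and> u \<in> V \<and> v \<in> V \<and> u \<noteq> v \<and>
    (\<forall>S :: nat set. card S = k \<longrightarrow>
       (\<exists>p. is_path E p u v \<and> rainbow c p \<and> (\<forall>e \<in> set (path_edges p). c e \<notin> S))) \<and>
    (\<forall>p q. is_path E p u v \<and> rainbow c p \<and> is_path E q u v \<and> rainbow c q \<longrightarrow>
       set (path_edges p) \<inter> set (path_edges q) \<noteq> {})"
proof -
  define N where "N = hub k (2*k+1)"
  have "gadget_arcs k \<subseteq> {..N} \<times> {..N}"
    using gadget_arc_skips_no_hub by (fastforce simp: N_def)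
  moreover have "0 \<noteq> N"
    by (simp add: N_def)
  moreover have "\<exists>p. is_path (gadget_arcs k) p 0 N \<and> rainbow (gadget_colour k) p
      \<and> (\<forall>e \<in> set (path_edges p). gadget_colour k e \<notin> S)" if "card S = k" for S
    using gadget_rainbow_path_avoiding[of S k] that assms card_ge_0_finite[of S] by (simp add: N_def)
  ultimately show ?thesis
    using gadget_rainbow_paths_share_arc[of k] unfolding N_def
    by (intro exI[of _ "{..N}"] exI[of _ "gadget_arcs k"] exI[of _ "gadget_colour k"]
        exI[of _ 0] exI[of _ N]) (auto simp: N_def)
qed

end
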